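(* Let $(B,\lfloor\cdot,\cdot\rfloor)$ be an SSD space with quadratic form $q$ and let $P\subset B$ be $q$-positive. Then $P$ is premaximally $q$-positive if and only if either $\Phi_P(b)\ge q(b)$ for all $b\in B$, or $P^{\pi}$ is an affine subset of $B$.
   Context: An SSD space is a pair $(B,\lfloor\cdot,\cdot\rfloor)$ with $B$ a nonzero real vector space and $\lfloor\cdot,\cdot\rfloor$ a symmetric bilinear form; $q(b)=\frac12\lfloor b,b\rfloor$. A nonempty $A\subset B$ is $q$-positive if $q(b-c)\ge0$ for all $b,c\in A$; maximally $q$-positive if $q$-positive and not properly contained in another $q$-positive set. For $A\subset B$, $A^{\pi}:=\{b\in B: q(b-a)\ge0\ \forall a\in A\}$. For nonempty $A\subset B$, $\Phi_A:B\to\mathbb{R}\cup\{+\infty\}$, $\Phi_A(x)=\sup_{a\in A}\{\lfloor x,a\rfloor-q(a)\}$. A $q$-positive set $P$ is premaximally $q$-positive if there is a unique maximally $q$-positive set containing $P$. *)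

theory Defs
  imports "HOL-Analysis.Analysis" "HOL-Library.Extended_Real"
begin

definition ssd_space :: "('a::real_vector \<Rightarrow> 'a \<Rightarrow> real) \<Rightarrow> bool" where
  "ssd_space s \<longleftrightarrow> (\<exists>x::'a. x \<noteq> 0) \<and>
     (\<forall>x y. s x y = s y x) \<and>
     (\<forall>y. linear (\<lambda>x. s x y))"

definition qf :: "('a::real_vector \<Rightarrow> 'a \<Rightarrow> real) \<Rightarrow> 'a \<Rightarrow> real" where
  "qf s b = s b b / 2"

definition q_positive :: "('a::real_vector \<Rightarrow> 'a \<Rightarrow> real) \<Rightarrow> 'a set \<Rightarrow> bool" where
  "q_positive s A \<longleftrightarrow> A \<noteq> {} \<and> (\<forall>b\<in>A. \<forall>c\<in>A. qf s (b - c) \<ge> 0)"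

definition max_q_positive :: "('a::real_vector \<Rightarrow> 'a \<Rightarrow> real) \<Rightarrow> 'a set \<Rightarrow> bool" where
  "max_q_positive s A \<longleftrightarrow> q_positive s A \<and> (\<forall>C. q_positive s C \<and> A \<subseteq> C \<longrightarrow> C = A)"

definition pi_set :: "('a::real_vector \<Rightarrow> 'a \<Rightarrow> real) \<Rightarrow> 'a set \<Rightarrow> 'a set" where
  "pi_set s A = {b. \<forall>a\<in>A. qf s (b - a) \<ge> 0}"

definition Phi :: "('a::real_vector \<Rightarrow> 'a \<Rightarrow> real) \<Rightarrow> 'a set \<Rightarrow> 'a \<Rightarrow> ereal" where
  "Phi s A x = (SUP a\<in>A. ereal (s x a - qf s a))"

definition premax_q_positive :: "('a::real_vector \<Rightarrow> 'a \<Rightarrow> real) \<Rightarrow> 'a set \<Rightarrow> bool" where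
  "premax_q_positive s P \<longleftrightarrow> q_positive s P \<and> (\<exists>!M. max_q_positive s M \<and> P \<subseteq> M)"

end

theory Submission
  imports Defs
begin

text \<open>
  By Zorn's lemma every \<open>q\<close>-positive set lies in a maximally \<open>q\<close>-positive one, and every
  \<open>q\<close>-positive set containing \<open>P\<close> lies in \<open>P\<^sup>\<pi>\<close>. Hence \<open>P\<close> is premaximal exactly when \<open>P\<^sup>\<pi>\<close>
  itself is \<open>q\<close>-positive, and it remains to compare this with the two conditions.

  Along a line, \<open>q(\<cdot> - a)\<close> is a quadratic whose leading coefficient is \<open>q\<close> of the direction.
  If \<open>P\<^sup>\<pi>\<close> is affine and \<open>q(b - c) < 0\<close> for \<open>b, c \<in> P\<^sup>\<pi>\<close>, that quadratic along the line
  through \<open>b\<close> and \<open>c\<close> would be nonnegative. If \<open>\<Phi>\<^sub>P \<ge> q\<close>, the midpoint \<open>m\<close> of such \<open>b, c\<close> would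
  satisfy \<open>\<Phi>\<^sub>P(m) \<le> q(m) + q(b - c)/4 < q(m)\<close>.

  Conversely, let \<open>P\<^sup>\<pi>\<close> be \<open>q\<close>-positive and \<open>\<Phi>\<^sub>P(b\<^sub>0) < q(b\<^sub>0)\<close>, i.e. \<open>q(b\<^sub>0 - a) \<ge> \<delta> > 0\<close> on \<open>P\<close>.
  The directions \<open>v\<close> along which this margin decays at most linearly, uniformly in \<open>a \<in> P\<close>,
  form a convex cone containing \<open>P\<^sup>\<pi> - b\<^sub>0\<close>; small steps from \<open>b\<^sub>0\<close> along them stay in \<open>P\<^sup>\<pi>\<close>, so
  \<open>q(v - w) \<ge> 0\<close> for any two of them. Writing an affine combination of points of \<open>P\<^sup>\<pi>\<close> minus
  \<open>a \<in> P\<close> as a difference of two such directions shows that \<open>P\<^sup>\<pi>\<close> is affine.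
\<close>

lemma q_positive_subset_pi_set:
  assumes "q_positive s C" "P \<subseteq> C"
  shows "C \<subseteq> pi_set s P"
  using assms unfolding q_positive_def pi_set_def by blast

lemma q_positive_Union_chain:
  assumes "Ch \<noteq> {}" "subset.chain {D. q_positive s D} Ch"
  shows "q_positive s (\<Union>Ch)"
proof -
  have comparable: "X \<subseteq> Y \<or> Y \<subseteq> X" if "X \<in> Ch" "Y \<in> Ch" for X Y
    using assms(2) that unfolding subset_chain_def by blast
  have members: "q_positive s X" if "X \<in> Ch" for X
    using assms(2) that unfolding subset_chain_def by blast
  have "qf s (b - c) \<ge> 0" if bc: "b \<in> \<Union>Ch" "c \<in> \<Union>Ch" for b c
  proof -
    obtain X Y where "X \<in> Ch" "Y \<in> Ch" "b \<in> X" "c \<in> Y" using bc by blast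
    then obtain Z where "Z \<in> Ch" "b \<in> Z" "c \<in> Z" using comparable by blast
    then show ?thesis using members unfolding q_positive_def by blast
  qed
  moreover have "\<Union>Ch \<noteq> {}" using assms(1) members unfolding q_positive_def by blast
  ultimately show ?thesis unfolding q_positive_def by blast
qed

lemma q_positive_imp_max_q_positive_superset:
  assumes "q_positive s C"
  shows "\<exists>M. max_q_positive s M \<and> C \<subseteq> M"
proof -
  let ?A = "{D. q_positive s D \<and> C \<subseteq> D}"
  have "\<Union>Ch \<in> ?A" if "Ch \<noteq> {}" "subset.chain ?A Ch" for Ch
  proof -
    have "subset.chain {D. q_positive s D} Ch" "\<forall>X\<in>Ch. C \<subseteq> X"
      using that(2) unfolding subset_chain_def by auto
    then show ?thesis using q_positive_Union_chain that(1) by blast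
  qed
  then obtain M where "M \<in> ?A" "\<forall>X\<in>?A. M \<subseteq> X \<longrightarrow> X = M"
    using subset_Zorn_nonempty[of ?A] assms by blast
  then show ?thesis unfolding max_q_positive_def by blast
qed

lemma exists_quadratic_neg:
  fixes a b c :: real
  assumes "a < 0"
  shows "\<exists>t. a * t\<^sup>2 + b * t + c < 0"
proof -
  define K where "K = \<bar>b\<bar> + \<bar>c\<bar> + 1"
  define t where "t = K / (- a) + 1"
  have "K / (- a) \<ge> 0" using assms unfolding K_def by (intro divide_nonneg_pos) auto
  then have t1: "t \<ge> 1" unfolding t_def by linarith
  have "(- a) * t \<ge> (- a) * (K / (- a))"
    using assms unfolding t_def by (intro mult_left_mono) auto
  then have "(- a) * t \<ge> K" using assms by simp
  then have "(- a) * t * t \<ge> K * t"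
    using t1 by (intro mult_right_mono) auto
  moreover have "b * t \<le> \<bar>b\<bar> * t" using t1 by (intro mult_right_mono) auto
  moreover have "\<bar>c\<bar> + 1 \<le> (\<bar>c\<bar> + 1) * t"
    using mult_left_mono[OF t1, of "\<bar>c\<bar> + 1"] by simp
  ultimately have "a * t\<^sup>2 + b * t + c \<le> -1"
    unfolding K_def by (simp add: power2_eq_square algebra_simps)
  then show ?thesis by (intro exI[of _ t]) simp
qed

lemma scaleR_max_diff: "max r 0 *\<^sub>R v - max (- r) 0 *\<^sub>R v = r *\<^sub>R (v::'a::real_vector)"
  by (cases "r \<ge> 0") (auto simp: max_def)

locale sym_bilinear =
  fixes s :: "'a::real_vector \<Rightarrow> 'a \<Rightarrow> real"
  assumes sym: "s x y = s y x"
    and linear_left: "linear (\<lambda>x. s x y)"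

lemma ssd_space_imp_sym_bilinear: "ssd_space s \<Longrightarrow> sym_bilinear s"
  unfolding ssd_space_def sym_bilinear_def by blast

context sym_bilinear
begin

lemma add_left: "s (x + y) z = s x z + s y z"
  using linear_add[OF linear_left] .

lemma scaleR_left: "s (c *\<^sub>R x) z = c * s x z"
  using linear_scale[OF linear_left] by simp

lemma diff_left: "s (x - y) z = s x z - s y z"
  using linear_diff[OF linear_left] .

lemma add_right: "s z (x + y) = s z x + s z y"
  using add_left sym by metis

lemma scaleR_right: "s z (c *\<^sub>R x) = c * s z x"
  using scaleR_left sym by metis

lemma diff_right: "s z (x - y) = s z x - s z y"
  using diff_left sym by metis

lemmas bilinear_simps = add_left scaleR_left diff_left add_right scaleR_right diff_right

lemma qf_diff: "qf s (x - y) = qf s x - s x y + qf s y"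
  unfolding qf_def using sym[of x y] by (simp add: bilinear_simps field_simps)

lemma qf_diff_commute: "qf s (x - y) = qf s (y - x)"
  using qf_diff[of x y] qf_diff[of y x] sym[of x y] by simp

lemma qf_zero: "qf s 0 = 0"
  unfolding qf_def using linear_0[OF linear_left] by simp

lemma qf_scaleR: "qf s (c *\<^sub>R x) = c\<^sup>2 * qf s x"
  unfolding qf_def by (simp add: bilinear_simps power2_eq_square)

lemma bilinear_minus_qf: "s b a - qf s a = qf s b - qf s (b - a)"
  using qf_diff[of b a] by simp

lemma qf_affine_combination:
  "qf s ((1 - t) *\<^sub>R x + t *\<^sub>R y - a) =
     (1 - t) * qf s (x - a) + t * qf s (y - a) - t * (1 - t) * qf s (x - y)"
proof -
  have "(1 - t) *\<^sub>R x + t *\<^sub>R y - a = (x - a) - t *\<^sub>R (x - y)"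
    by (simp add: algebra_simps)
  then have line: "qf s ((1 - t) *\<^sub>R x + t *\<^sub>R y - a) =
      qf s (x - a) - t * s (x - a) (x - y) + t\<^sup>2 * qf s (x - y)"
    using qf_diff[of "x - a" "t *\<^sub>R (x - y)"] by (simp only: qf_scaleR scaleR_right)
  have cross: "s (x - a) (x - y) = qf s (x - a) + qf s (x - y) - qf s (y - a)"
    using qf_diff[of "x - a" "x - y"] by simp
  show ?thesis unfolding line cross by (simp add: power2_eq_square algebra_simps)
qed

lemma q_positive_insert:
  assumes "q_positive s P" "b \<in> pi_set s P"
  shows "q_positive s (insert b P)"
  using assms qf_diff_commute[of _ b] qf_zero unfolding q_positive_def pi_set_def by auto

lemma premax_q_positive_iff_q_positive_pi_set:
  assumes P: "q_positive s P"
  shows "premax_q_positive s P \<longleftrightarrow> q_positive s (pi_set s P)"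
proof
  assume premax: "premax_q_positive s P"
  have "qf s (b - c) \<ge> 0" if bc: "b \<in> pi_set s P" "c \<in> pi_set s P" for b c
  proof -
    obtain Mb where Mb: "max_q_positive s Mb" "insert b P \<subseteq> Mb"
      using q_positive_imp_max_q_positive_superset q_positive_insert[OF P bc(1)] by blast
    obtain Mc where Mc: "max_q_positive s Mc" "insert c P \<subseteq> Mc"
      using q_positive_imp_max_q_positive_superset q_positive_insert[OF P bc(2)] by blast
    have "Mb = Mc" using premax Mb Mc unfolding premax_q_positive_def by blast
    then have "b \<in> Mb" "c \<in> Mb" using Mb(2) Mc(2) by auto
    moreover have "q_positive s Mb" using Mb(1) unfolding max_q_positive_def by blast
    ultimately show ?thesis unfolding q_positive_def by blast
  qed
  moreover have "P \<subseteq> pi_set s P" using q_positive_subset_pi_set[OF P] by blast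
  ultimately show "q_positive s (pi_set s P)" using P unfolding q_positive_def by blast
next
  assume pi: "q_positive s (pi_set s P)"
  have P_pi: "P \<subseteq> pi_set s P" using q_positive_subset_pi_set[OF P] by blast
  have "C = pi_set s P" if "q_positive s C" "pi_set s P \<subseteq> C" for C
    using that P_pi q_positive_subset_pi_set[of s C P] by blast
  then have "max_q_positive s (pi_set s P)" using pi unfolding max_q_positive_def by blast
  moreover have "M = pi_set s P" if M: "max_q_positive s M" "P \<subseteq> M" for M
  proof -
    have "M \<subseteq> pi_set s P"
      using M q_positive_subset_pi_set[of s M P] unfolding max_q_positive_def by blast
    then show ?thesis using M(1) pi unfolding max_q_positive_def by blast
  qed
  ultimately show "premax_q_positive s P"
    using P P_pi unfolding premax_q_positive_def by blast
qed

lemma Phi_le_qf_minus_margin: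
  assumes "\<forall>a\<in>P. \<eta> \<le> qf s (b - a)"
  shows "Phi s P b \<le> ereal (qf s b - \<eta>)"
  unfolding Phi_def
proof (rule SUP_least)
  fix a assume "a \<in> P"
  then show "ereal (s b a - qf s a) \<le> ereal (qf s b - \<eta>)"
    using assms bilinear_minus_qf[of b a] by simp
qed

lemma Phi_less_qf_imp_margin:
  assumes "Phi s P b < ereal (qf s b)"
  obtains \<delta> where "\<delta> > 0" "\<forall>a\<in>P. \<delta> \<le> qf s (b - a)"
proof -
  obtain c where c: "Phi s P b < ereal c" "c < qf s b"
    using ereal_dense2[OF assms] by auto
  have "qf s b - c \<le> qf s (b - a)" if "a \<in> P" for a
  proof -
    have "ereal (s b a - qf s a) \<le> Phi s P b"
      unfolding Phi_def using that by (rule SUP_upper)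
    then have "ereal (s b a - qf s a) < ereal c" using c(1) by (rule le_less_trans)
    then show ?thesis using bilinear_minus_qf[of b a] by simp
  qed
  then show ?thesis using c(2) by (intro that[of "qf s b - c"]) auto
qed

lemma Phi_ge_qf_imp_q_positive_pi_set:
  assumes P: "q_positive s P" and Phi: "\<forall>b. ereal (qf s b) \<le> Phi s P b"
  shows "q_positive s (pi_set s P)"
proof -
  have "qf s (b - c) \<ge> 0" if bc: "b \<in> pi_set s P" "c \<in> pi_set s P" for b c
  proof (rule ccontr)
    assume "\<not> qf s (b - c) \<ge> 0"
    then have \<eta>: "- qf s (b - c) / 4 > 0" by simp
    define m where "m = (1 - 1/2) *\<^sub>R b + (1/2) *\<^sub>R c"
    have "- qf s (b - c) / 4 \<le> qf s (m - a)" if "a \<in> P" for a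
      using bc that qf_affine_combination[of "1/2" b c a] unfolding m_def pi_set_def by auto
    then have "Phi s P m \<le> ereal (qf s m - - qf s (b - c) / 4)"
      by (intro Phi_le_qf_minus_margin) blast
    also have "\<dots> < ereal (qf s m)" using \<eta> by simp
    finally show False using Phi by (meson leD)
  qed
  moreover have "pi_set s P \<noteq> {}"
    using P q_positive_subset_pi_set[OF P] unfolding q_positive_def by blast
  ultimately show ?thesis unfolding q_positive_def by blast
qed

lemma affine_pi_set_imp_q_positive:
  assumes P: "q_positive s P" and affine: "affine (pi_set s P)"
  shows "q_positive s (pi_set s P)"
proof -
  obtain a where a: "a \<in> P" using P unfolding q_positive_def by blast
  have "qf s (b - c) \<ge> 0" if bc: "b \<in> pi_set s P" "c \<in> pi_set s P" for b c
  proof (rule ccontr)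
    assume "\<not> qf s (b - c) \<ge> 0"
    then obtain t where t:
      "qf s (b - c) * t\<^sup>2 + (qf s (c - a) - qf s (b - a) - qf s (b - c)) * t + qf s (b - a) < 0"
      using exists_quadratic_neg by force
    have "(1 - t) *\<^sub>R b + t *\<^sub>R c \<in> pi_set s P"
      using affine bc unfolding affine_def by simp
    then have "qf s ((1 - t) *\<^sub>R b + t *\<^sub>R c - a) \<ge> 0"
      using a unfolding pi_set_def by blast
    then show False
      using t qf_affine_combination[of t b c a] by (simp add: power2_eq_square algebra_simps)
  qed
  moreover have "pi_set s P \<noteq> {}"
    using P q_positive_subset_pi_set[OF P] unfolding q_positive_def by blast
  ultimately show ?thesis unfolding q_positive_def by blast
qed

context
  fixes P :: "'a set" and b0 :: 'a and \<delta> :: real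
  assumes pi_q_positive: "q_positive s (pi_set s P)"
    and margin_pos: "\<delta> > 0"
    and margin: "\<forall>a\<in>P. \<delta> \<le> qf s (b0 - a)"
begin

definition admissible_direction :: "'a \<Rightarrow> bool" where
  "admissible_direction v \<longleftrightarrow>
     (\<exists>C \<epsilon>. \<epsilon> > 0 \<and> (\<forall>a\<in>P. \<forall>t. 0 \<le> t \<and> t \<le> \<epsilon> \<longrightarrow> \<delta> - C * t \<le> qf s (b0 + t *\<^sub>R v - a)))"

lemma admissible_direction_pi_set:
  assumes x: "x \<in> pi_set s P"
  shows "admissible_direction (x - b0)"
  unfolding admissible_direction_def
proof (intro exI conjI ballI allI impI)
  fix a t assume a: "a \<in> P" and t: "0 \<le> t \<and> t \<le> (1::real)"
  let ?Q = "qf s (b0 - x)"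
  have "t * (1 - t) * ?Q \<le> t * (1 - t) * \<bar>?Q\<bar>" using t by (intro mult_left_mono) auto
  also have "\<dots> \<le> t * \<bar>?Q\<bar>" using t by (intro mult_right_mono) (auto simp: mult_left_le)
  finally have "t * (1 - t) * ?Q \<le> t * \<bar>?Q\<bar>" .
  moreover have "(1 - t) * \<delta> \<le> (1 - t) * qf s (b0 - a)"
    using margin a t by (intro mult_left_mono) auto
  moreover have "0 \<le> t * qf s (x - a)" using x a t unfolding pi_set_def by auto
  moreover have "b0 + t *\<^sub>R (x - b0) - a = (1 - t) *\<^sub>R b0 + t *\<^sub>R x - a"
    by (simp add: algebra_simps)
  ultimately show "\<delta> - (\<delta> + \<bar>qf s (b0 - x)\<bar>) * t \<le> qf s (b0 + t *\<^sub>R (x - b0) - a)"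
    using qf_affine_combination[of t b0 x a] by (simp add: algebra_simps)
qed simp

lemma admissible_direction_add:
  assumes "admissible_direction v" "admissible_direction w"
  shows "admissible_direction (v + w)"
proof -
  obtain C \<epsilon> where \<epsilon>: "\<epsilon> > 0"
    and C: "\<forall>a\<in>P. \<forall>t. 0 \<le> t \<and> t \<le> \<epsilon> \<longrightarrow> \<delta> - C * t \<le> qf s (b0 + t *\<^sub>R v - a)"
    using assms(1) unfolding admissible_direction_def by blast
  obtain D \<epsilon>' where \<epsilon>': "\<epsilon>' > 0"
    and D: "\<forall>a\<in>P. \<forall>t. 0 \<le> t \<and> t \<le> \<epsilon>' \<longrightarrow> \<delta> - D * t \<le> qf s (b0 + t *\<^sub>R w - a)"
    using assms(2) unfolding admissible_direction_def by blast
  let ?Q = "qf s (v - w)"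
  show ?thesis unfolding admissible_direction_def
  proof (intro exI conjI ballI allI impI)
    show "min (min \<epsilon> \<epsilon>') 1 / 2 > 0" using \<epsilon> \<epsilon>' by simp
    fix a t assume a: "a \<in> P" and t: "0 \<le> t \<and> t \<le> min (min \<epsilon> \<epsilon>') 1 / 2"
    have "\<delta> - C * (2 * t) \<le> qf s (b0 + (2 * t) *\<^sub>R v - a)"
      "\<delta> - D * (2 * t) \<le> qf s (b0 + (2 * t) *\<^sub>R w - a)"
      using C D a t by auto
    moreover have "t\<^sup>2 * ?Q \<le> t * \<bar>?Q\<bar>"
    proof -
      have "t\<^sup>2 * ?Q \<le> t\<^sup>2 * \<bar>?Q\<bar>" by (intro mult_left_mono) auto
      also have "\<dots> \<le> t * \<bar>?Q\<bar>" using t by (intro mult_right_mono) (auto simp: power2_eq_square mult_left_le)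
      finally show ?thesis .
    qed
    moreover have "qf s (b0 + t *\<^sub>R (v + w) - a) =
        (qf s (b0 + (2 * t) *\<^sub>R v - a) + qf s (b0 + (2 * t) *\<^sub>R w - a)) / 2 - t\<^sup>2 * ?Q"
    proof -
      have "b0 + t *\<^sub>R (v + w) = (1 - 1/2) *\<^sub>R (b0 + (2 * t) *\<^sub>R v) + (1/2) *\<^sub>R (b0 + (2 * t) *\<^sub>R w)"
        by (simp add: algebra_simps) (simp flip: scaleR_add_left)
      moreover have "(b0 + (2 * t) *\<^sub>R v) - (b0 + (2 * t) *\<^sub>R w) = (2 * t) *\<^sub>R (v - w)"
        by (simp add: algebra_simps)
      ultimately show ?thesis
        using qf_affine_combination[of "1/2" "b0 + (2 * t) *\<^sub>R v" "b0 + (2 * t) *\<^sub>R w" a]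
        by (simp add: qf_scaleR power2_eq_square)
    qed
    ultimately show "\<delta> - (C + D + \<bar>?Q\<bar>) * t \<le> qf s (b0 + t *\<^sub>R (v + w) - a)"
      by (simp add: algebra_simps)
  qed
qed

lemma admissible_direction_scaleR:
  assumes v: "admissible_direction v" and c: "c \<ge> 0"
  shows "admissible_direction (c *\<^sub>R v)"
proof (cases "c = 0")
  case True
  then show ?thesis
    unfolding admissible_direction_def using margin by (intro exI[of _ 0] exI[of _ 1]) auto
next
  case False
  with c have c: "c > 0" by simp
  obtain C \<epsilon> where \<epsilon>: "\<epsilon> > 0"
    and C: "\<forall>a\<in>P. \<forall>t. 0 \<le> t \<and> t \<le> \<epsilon> \<longrightarrow> \<delta> - C * t \<le> qf s (b0 + t *\<^sub>R v - a)"
    using v unfolding admissible_direction_def by blast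
  show ?thesis unfolding admissible_direction_def
  proof (intro exI conjI ballI allI impI)
    show "\<epsilon> / c > 0" using \<epsilon> c by simp
    fix a t assume a: "a \<in> P" and t: "0 \<le> t \<and> t \<le> \<epsilon> / c"
    then have "t * c \<le> \<epsilon>" using c by (simp add: field_simps)
    then have "\<delta> - C * (t * c) \<le> qf s (b0 + (t * c) *\<^sub>R v - a)" using C a t c by simp
    then show "\<delta> - (C * c) * t \<le> qf s (b0 + t *\<^sub>R (c *\<^sub>R v) - a)" by (simp add: algebra_simps)
  qed
qed

lemma admissible_direction_imp_pi_set:
  assumes "admissible_direction v"
  obtains \<epsilon> where "\<epsilon> > 0" "\<And>t. 0 \<le> t \<Longrightarrow> t \<le> \<epsilon> \<Longrightarrow> b0 + t *\<^sub>R v \<in> pi_set s P"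
proof -
  obtain C \<epsilon> where \<epsilon>: "\<epsilon> > 0"
    and C: "\<forall>a\<in>P. \<forall>t. 0 \<le> t \<and> t \<le> \<epsilon> \<longrightarrow> \<delta> - C * t \<le> qf s (b0 + t *\<^sub>R v - a)"
    using assms unfolding admissible_direction_def by blast
  define \<epsilon>' where "\<epsilon>' = min \<epsilon> (\<delta> / (\<bar>C\<bar> + 1))"
  have "b0 + t *\<^sub>R v \<in> pi_set s P" if t: "0 \<le> t" "t \<le> \<epsilon>'" for t
  proof -
    have "(\<bar>C\<bar> + 1) * t \<le> (\<bar>C\<bar> + 1) * (\<delta> / (\<bar>C\<bar> + 1))"
      using t unfolding \<epsilon>'_def by (intro mult_left_mono) auto
    moreover have "C * t \<le> (\<bar>C\<bar> + 1) * t" using t by (intro mult_right_mono) auto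
    ultimately have "C * t \<le> \<delta>" by simp
    then show ?thesis using C t unfolding \<epsilon>'_def pi_set_def by force
  qed
  moreover have "\<epsilon>' > 0" unfolding \<epsilon>'_def using \<epsilon> margin_pos by simp
  ultimately show ?thesis using that by blast
qed

lemma admissible_direction_qf_diff_nonneg:
  assumes "admissible_direction v" "admissible_direction w"
  shows "qf s (v - w) \<ge> 0"
proof -
  obtain \<epsilon> where \<epsilon>: "\<epsilon> > 0" "\<And>t. 0 \<le> t \<Longrightarrow> t \<le> \<epsilon> \<Longrightarrow> b0 + t *\<^sub>R v \<in> pi_set s P"
    using admissible_direction_imp_pi_set[OF assms(1)] by blast
  obtain \<epsilon>' where \<epsilon>': "\<epsilon>' > 0" "\<And>t. 0 \<le> t \<Longrightarrow> t \<le> \<epsilon>' \<Longrightarrow> b0 + t *\<^sub>R w \<in> pi_set s P"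
    using admissible_direction_imp_pi_set[OF assms(2)] by blast
  define t where "t = min \<epsilon> \<epsilon>'"
  have t: "t > 0" unfolding t_def using \<epsilon> \<epsilon>' by simp
  have "b0 + t *\<^sub>R v \<in> pi_set s P" "b0 + t *\<^sub>R w \<in> pi_set s P"
    using \<epsilon> \<epsilon>' t unfolding t_def by auto
  then have "qf s ((b0 + t *\<^sub>R v) - (b0 + t *\<^sub>R w)) \<ge> 0"
    using pi_q_positive unfolding q_positive_def by blast
  then have "t\<^sup>2 * qf s (v - w) \<ge> 0" by (simp add: qf_scaleR flip: scaleR_diff_right)
  then show ?thesis using t by (simp add: zero_le_mult_iff)
qed

lemma affine_pi_set:
  assumes P: "q_positive s P"
  shows "affine (pi_set s P)"
  unfolding affine_def
proof (intro ballI allI impI)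
  fix x y and l m :: real
  assume x: "x \<in> pi_set s P" and y: "y \<in> pi_set s P" and lm: "l + m = 1"
  define k where "k = max l 0 *\<^sub>R (x - b0) + max m 0 *\<^sub>R (y - b0)"
  define k' where "k' = max (- l) 0 *\<^sub>R (x - b0) + max (- m) 0 *\<^sub>R (y - b0)"
  have k: "admissible_direction k" and k': "admissible_direction k'"
    unfolding k_def k'_def using admissible_direction_pi_set[OF x] admissible_direction_pi_set[OF y]
    by (intro admissible_direction_add admissible_direction_scaleR; simp)+
  have "qf s (l *\<^sub>R x + m *\<^sub>R y - a) \<ge> 0" if a: "a \<in> P" for a
  proof -
    have "a \<in> pi_set s P" using q_positive_subset_pi_set[OF P] a by blast
    then have "admissible_direction (k' + (a - b0))"
      by (intro admissible_direction_add k' admissible_direction_pi_set)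
    then have "qf s (k - (k' + (a - b0))) \<ge> 0"
      using k admissible_direction_qf_diff_nonneg by blast
    moreover have "k - k' = l *\<^sub>R (x - b0) + m *\<^sub>R (y - b0)"
      unfolding k_def k'_def
      using scaleR_max_diff[of l "x - b0"] scaleR_max_diff[of m "y - b0"] by (metis add_diff_add)
    then have "k - (k' + (a - b0)) = l *\<^sub>R (x - b0) + m *\<^sub>R (y - b0) - (a - b0)"
      by (simp add: algebra_simps)
    moreover have "\<dots> = l *\<^sub>R x + m *\<^sub>R y - a"
      using lm by (simp add: algebra_simps flip: scaleR_add_left)
    ultimately show ?thesis by simp
  qed
  then show "l *\<^sub>R x + m *\<^sub>R y \<in> pi_set s P" unfolding pi_set_def by blast
qed

end

lemma q_positive_pi_set_imp_affine:
  assumes "q_positive s P" "q_positive s (pi_set s P)" "Phi s P b < ereal (qf s b)"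
  shows "affine (pi_set s P)"
  using Phi_less_qf_imp_margin[OF assms(3)] affine_pi_set[OF assms(2) _ _ assms(1)] by blast

end

theorem mainTheorem3:
  fixes s :: "'a::real_vector \<Rightarrow> 'a \<Rightarrow> real" and P :: "'a set"
  assumes "ssd_space s"
    and "q_positive s P"
  shows "premax_q_positive s P \<longleftrightarrow>
           ((\<forall>b. ereal (qf s b) \<le> Phi s P b) \<or> affine (pi_set s P))"
proof -
  interpret sym_bilinear s using assms(1) by (rule ssd_space_imp_sym_bilinear)
  have "q_positive s (pi_set s P) \<longleftrightarrow>
      (\<forall>b. ereal (qf s b) \<le> Phi s P b) \<or> affine (pi_set s P)"
    using assms(2) q_positive_pi_set_imp_affine Phi_ge_qf_imp_q_positive_pi_set
      affine_pi_set_imp_q_positive by (meson not_le)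
  then show ?thesis using premax_q_positive_iff_q_positive_pi_set[OF assms(2)] by simp
qed

end
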